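(* Let $n\ge2$ and let $x\in\overline{L_n}$ be an ultrafilter that is not irreducible in $\beta\mathbb{N}$. Then there exist $i,j<n$ and ultrafilters $x_i\in\overline{L_i}$, $x_j\in\overline{L_j}$ such that $x=x_ix_j$.
   Context: $\mathbb{N}=\{1,2,3,\dots\}$; $\beta\mathbb{N}$ is the set of ultrafilters on $\mathbb{N}$ (Stone–Čech compactification, naturals identified with principal ultrafilters), with multiplication: $A\in xy$ iff $\{n:A/n\in y\}\in x$, $A/n=\{m:mn\in A\}$. For $A\subseteq\mathbb{N}$, $\overline{A}=\{x\in\beta\mathbb{N}:A\in x\}$. $P$ is the set of primes, $L_0=\{1\}$, $L_n=\{a_1\cdots a_n:a_i\in P\}$. An element $p\in\beta\mathbb{N}$ is irreducible if it cannot be written as $p=xy$ with $x,y\in\beta\mathbb{N}\setminus\{1\}$. *)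

theory Defs
  imports "HOL-Computational_Algebra.Primes"
begin

definition PosN :: "nat set" where
  "PosN = {n. 1 \<le> n}"

text \<open>Ultrafilters on N (elements of beta N), represented as sets of subsets of N.\<close>
definition is_uf :: "nat set set \<Rightarrow> bool" where
  "is_uf x \<longleftrightarrow>
     x \<subseteq> Pow PosN \<and> PosN \<in> x \<and> {} \<notin> x \<and>
     (\<forall>A\<in>x. \<forall>B\<in>x. A \<inter> B \<in> x) \<and>
     (\<forall>A\<in>x. \<forall>B. A \<subseteq> B \<and> B \<subseteq> PosN \<longrightarrow> B \<in> x) \<and>
     (\<forall>A. A \<subseteq> PosN \<longrightarrow> A \<in> x \<or> PosN - A \<in> x)"

text \<open>Principal ultrafilter at n (identification of N with principal ultrafilters).\<close>
definition princ :: "nat \<Rightarrow> nat set set" where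
  "princ n = {A. A \<subseteq> PosN \<and> n \<in> A}"

definition sdiv :: "nat set \<Rightarrow> nat \<Rightarrow> nat set" where
  "sdiv A n = {m \<in> PosN. m * n \<in> A}"

definition uf_mult :: "nat set set \<Rightarrow> nat set set \<Rightarrow> nat set set" where
  "uf_mult x y = {A. A \<subseteq> PosN \<and> {n \<in> PosN. sdiv A n \<in> y} \<in> x}"

definition ucl :: "nat set \<Rightarrow> nat set set set" where
  "ucl A = {x. is_uf x \<and> A \<in> x}"

definition Lset :: "nat \<Rightarrow> nat set" where
  "Lset k = {prod_list ps | ps. length ps = k \<and> (\<forall>p\<in>set ps. prime p)}"

definition uf_irreducible :: "nat set set \<Rightarrow> bool" where
  "uf_irreducible p \<longleftrightarrow> is_uf p \<and>
     \<not> (\<exists>x y. is_uf x \<and> is_uf y \<and> x \<noteq> princ 1 \<and> y \<noteq> princ 1 \<and> p = uf_mult x y)"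

end

theory Submission
  imports Defs
begin

text \<open>
  If \<open>x = y z\<close> and \<open>L\<^sub>n \<in> x\<close>, then \<open>y\<close> contains the set of all \<open>a\<close> with \<open>L\<^sub>n/a \<in> z\<close>.
  Each such \<open>a\<close> has at most \<open>n\<close> prime factors, so \<open>L\<^sub>i \<in> y\<close> for some \<open>i \<le> n\<close>;
  for any \<open>a \<in> L\<^sub>i\<close> in that set, \<open>L\<^sub>n/a \<subseteq> L\<^sub>n\<^sub>-\<^sub>i\<close>, hence \<open>L\<^sub>n\<^sub>-\<^sub>i \<in> z\<close>.
  Since \<open>L\<^sub>0 = {1}\<close> belongs only to the ultrafilter \<open>1\<close>, nontrivial factors force \<open>0 < i < n\<close>.
\<close>

definition bigomega :: "nat \<Rightarrow> nat" where
  "bigomega m = size (prime_factorization m)"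

lemma bigomega_mult: "a > 0 \<Longrightarrow> b > 0 \<Longrightarrow> bigomega (a * b) = bigomega a + bigomega b"
  by (simp add: bigomega_def prime_factorization_mult)

lemma mem_Lset_iff: "m \<in> Lset k \<longleftrightarrow> m > 0 \<and> bigomega m = k"
proof
  assume "m \<in> Lset k"
  then obtain ps where ps: "m = prod_list ps" "length ps = k" "\<forall>p\<in>set ps. prime p"
    unfolding Lset_def by blast
  have "prime_factorization (prod_mset (mset ps)) = mset ps"
    by (rule prime_factorization_prod_mset_primes) (use ps in auto)
  then have "bigomega m = k"
    using ps by (simp add: bigomega_def prod_mset_prod_list)
  moreover have "m \<noteq> 0"
    using ps by (auto simp: prod_list_zero_iff dest: prime_gt_0_nat)
  ultimately show "m > 0 \<and> bigomega m = k" by simp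
next
  assume m: "m > 0 \<and> bigomega m = k"
  obtain ps where ps: "mset ps = prime_factorization m"
    using ex_mset by blast
  have "prod_list ps = m"
    using ps m prod_mset_prime_factorization_nat[of m] by (metis prod_mset_prod_list)
  moreover have "length ps = k"
    using ps m by (metis bigomega_def size_mset)
  moreover have "\<forall>p\<in>set ps. prime p"
    using ps by (metis in_prime_factors_imp_prime set_mset_mset)
  ultimately show "m \<in> Lset k"
    unfolding Lset_def by blast
qed

lemma Lset_subset_PosN: "Lset k \<subseteq> PosN"
  by (auto simp: mem_Lset_iff PosN_def)

lemma Lset_0: "Lset 0 = {1}"
proof -
  have "m \<in> Lset 0 \<longleftrightarrow> m = 1" for m
    by (auto simp: mem_Lset_iff bigomega_def prime_factorization_empty_iff)
  then show ?thesis by blast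
qed

lemma Lset_mult_cancel:
  assumes "a \<in> Lset i" and "m * a \<in> Lset n"
  shows "i \<le> n \<and> m \<in> Lset (n - i)"
  using assms bigomega_mult[of m a] by (auto simp: mem_Lset_iff)

lemma uf_subset_PosN: "is_uf y \<Longrightarrow> A \<in> y \<Longrightarrow> A \<subseteq> PosN"
  unfolding is_uf_def by auto

lemma uf_Int: "is_uf y \<Longrightarrow> A \<in> y \<Longrightarrow> B \<in> y \<Longrightarrow> A \<inter> B \<in> y"
  unfolding is_uf_def by (elim conjE) simp

lemma uf_mono: "is_uf y \<Longrightarrow> A \<in> y \<Longrightarrow> A \<subseteq> B \<Longrightarrow> B \<subseteq> PosN \<Longrightarrow> B \<in> y"
  unfolding is_uf_def by (elim conjE) metis

lemma uf_Int_nonempty: "is_uf y \<Longrightarrow> A \<in> y \<Longrightarrow> B \<in> y \<Longrightarrow> A \<inter> B \<noteq> {}"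
  using uf_Int unfolding is_uf_def by (metis (no_types))

lemma uf_Un_cases:
  assumes y: "is_uf y" and AB: "A \<union> B \<in> y"
  shows "A \<in> y \<or> B \<in> y"
proof (rule ccontr)
  assume neither: "\<not> (A \<in> y \<or> B \<in> y)"
  have "A \<subseteq> PosN" "B \<subseteq> PosN"
    using uf_subset_PosN[OF y AB] by auto
  then have "PosN - A \<in> y"
    using y neither unfolding is_uf_def by blast
  then have "(A \<union> B) \<inter> (PosN - A) \<in> y"
    using uf_Int[OF y AB] by blast
  then have "B \<in> y"
    using uf_mono[OF y] \<open>B \<subseteq> PosN\<close> by blast
  with neither show False by blast
qed

lemma uf_finite_UN_cases:
  assumes y: "is_uf y" and "finite I" and "(\<Union>i\<in>I. A i) \<in> y"
  shows "\<exists>i\<in>I. A i \<in> y"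
  using \<open>finite I\<close> \<open>(\<Union>i\<in>I. A i) \<in> y\<close>
proof (induction I rule: finite_induct)
  case empty
  with y show ?case unfolding is_uf_def by simp
next
  case (insert i I)
  then show ?case using uf_Un_cases[OF y, of "A i"] by auto
qed

lemma uf_eq_princI:
  assumes y: "is_uf y" and "{k} \<in> y"
  shows "y = princ k"
proof (intro set_eqI iffI)
  fix A assume "A \<in> y"
  then show "A \<in> princ k"
    using uf_Int_nonempty[OF y _ \<open>{k} \<in> y\<close>] uf_subset_PosN[OF y] by (auto simp: princ_def)
next
  fix A assume "A \<in> princ k"
  then show "A \<in> y"
    using uf_mono[OF y \<open>{k} \<in> y\<close>] by (auto simp: princ_def)
qed

lemma uf_mult_Lset_factors:
  assumes y: "is_uf y" and z: "is_uf z" and "Lset n \<in> uf_mult y z"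
  obtains i where "i \<le> n" "Lset i \<in> y" "Lset (n - i) \<in> z"
proof -
  define T where "T = {a \<in> PosN. sdiv (Lset n) a \<in> z}"
  have T: "T \<in> y"
    using assms(3) unfolding T_def uf_mult_def by simp
  have "T \<subseteq> (\<Union>i\<in>{..n}. Lset i)"
  proof
    fix a assume "a \<in> T"
    then have "sdiv (Lset n) a \<noteq> {}"
      using z unfolding T_def is_uf_def by auto
    then obtain m where "m * a \<in> Lset n"
      unfolding sdiv_def by auto
    then have "a \<in> Lset (bigomega a)" "bigomega a \<le> n"
      using Lset_mult_cancel[of a "bigomega a" m n] by (auto simp: mem_Lset_iff bigomega_mult)
    then show "a \<in> (\<Union>i\<in>{..n}. Lset i)" by blast
  qed
  then have "(\<Union>i\<in>{..n}. Lset i) \<in> y"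
    using uf_mono[OF y T] Lset_subset_PosN by blast
  then obtain i where i: "i \<le> n" "Lset i \<in> y"
    using uf_finite_UN_cases[OF y] by blast
  obtain a where a: "a \<in> Lset i" "a \<in> T"
    using uf_Int_nonempty[OF y i(2) T] by blast
  have "sdiv (Lset n) a \<subseteq> Lset (n - i)"
    using Lset_mult_cancel[OF a(1)] by (auto simp: sdiv_def)
  moreover have "sdiv (Lset n) a \<in> z"
    using a(2) by (simp add: T_def)
  ultimately have "Lset (n - i) \<in> z"
    using uf_mono[OF z] Lset_subset_PosN by blast
  with i that show thesis by blast
qed

theorem corollary2p12:
  fixes n :: nat and x :: "nat set set"
  assumes "n \<ge> 2"
    and "x \<in> ucl (Lset n)"
    and "\<not> uf_irreducible x"
  shows "\<exists>i j xi xj. i < n \<and> j < n \<and> xi \<in> ucl (Lset i) \<and> xj \<in> ucl (Lset j)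
           \<and> x = uf_mult xi xj"
proof -
  have "is_uf x" "Lset n \<in> x"
    using assms(2) by (auto simp: ucl_def)
  then obtain y z where y: "is_uf y" "y \<noteq> princ 1" and z: "is_uf z" "z \<noteq> princ 1"
    and x: "x = uf_mult y z"
    using assms(3) unfolding uf_irreducible_def by blast
  then obtain i where i: "i \<le> n" "Lset i \<in> y" "Lset (n - i) \<in> z"
    using uf_mult_Lset_factors \<open>Lset n \<in> x\<close> by blast
  have "i \<noteq> 0" "n - i \<noteq> 0"
    using i y z uf_eq_princI Lset_0 by auto
  with i y z x show ?thesis
    by (intro exI[of _ i] exI[of _ "n - i"] exI[of _ y] exI[of _ z]) (auto simp: ucl_def)
qed

end
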